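(* Let $G$ be a strongly connected network on $\mathcal{V}$ with random-walk transition matrix $P=[p_{ij}]$, stationary distribution $\pi$, and edge cost matrix $W=[w_{ij}]$. Let $L=\Pi(I-P)$ with $\Pi=\mathrm{diag}(\pi)$ and $L^+$ its Moore–Penrose pseudo-inverse. Let $r_m=\sum_{k} p_{mk}w_{mk}$ and $g_m=r_m\pi_m$. Then for all $i,j\in\mathcal{V}$ the hitting cost and commute cost satisfy $$\mathbb{U}_{ij}=\sum_m (L^+_{im}-L^+_{jm}+L^+_{jj}-L^+_{ij})\,g_m,$$ $$\mathbb{C}_{ij}=(L^+_{ii}+L^+_{jj}-L^+_{ij}-L^+_{ji})\sum_m g_m.$$
   Context: A network is a weighted directed graph with nonnegative affinity matrix $A$, $P=D^{-1}A$, $D=\mathrm{diag}(\sum_j a_{ij})$; strongly connected means all nodes mutually reachable. Each edge $(x,y)$ carries cost $w_{xy}$. The hitting cost $\mathbb{U}_{ij}$ is the expected total cost $\sum w_{X_{k-1}X_k}$ of the edges traversed by the random walk started at $i$ up to the first time it hits $j$ (equal to $0$ if $i=j$). The commute cost is $\mathbb{C}_{ij}=\mathbb{U}_{ij}+\mathbb{U}_{ji}$. *)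

theory Defs
  imports "HOL-Analysis.Analysis"
begin

definition degree :: "('n::finite \<Rightarrow> 'n \<Rightarrow> real) \<Rightarrow> 'n \<Rightarrow> real" where
  "degree A x = (\<Sum>z\<in>UNIV. A x z)"

definition trans_mat :: "('n::finite \<Rightarrow> 'n \<Rightarrow> real) \<Rightarrow> 'n \<Rightarrow> 'n \<Rightarrow> real" where
  "trans_mat A x y = A x y / degree A x"

definition strongly_connected :: "('n::finite \<Rightarrow> 'n \<Rightarrow> real) \<Rightarrow> bool" where
  "strongly_connected A \<longleftrightarrow> (\<forall>i j. (i, j) \<in> {(x, y). A x y > 0}\<^sup>*)"

definition stationary_dist :: "('n::finite \<Rightarrow> 'n \<Rightarrow> real) \<Rightarrow> ('n \<Rightarrow> real) \<Rightarrow> bool" where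
  "stationary_dist P \<pi> \<longleftrightarrow> (\<forall>i. \<pi> i \<ge> 0) \<and> (\<Sum>i\<in>UNIV. \<pi> i) = 1
      \<and> (\<forall>j. (\<Sum>i\<in>UNIV. \<pi> i * P i j) = \<pi> j)"

text \<open>A walk started at i is given by the list ys of the nodes visited after i.
  Its probability and its total edge cost.\<close>
definition walk_prob :: "('n \<Rightarrow> 'n \<Rightarrow> real) \<Rightarrow> 'n \<Rightarrow> 'n list \<Rightarrow> real" where
  "walk_prob P i ys = prod_list (map (\<lambda>(x, y). P x y) (zip (i # ys) ys))"

definition walk_cost :: "('n \<Rightarrow> 'n \<Rightarrow> real) \<Rightarrow> 'n \<Rightarrow> 'n list \<Rightarrow> real" where
  "walk_cost w i ys = sum_list (map (\<lambda>(x, y). w x y) (zip (i # ys) ys))"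

definition first_hit_walks :: "'n \<Rightarrow> 'n list set" where
  "first_hit_walks j = {ys. ys \<noteq> [] \<and> last ys = j \<and> j \<notin> set (butlast ys)}"

definition hitting_cost ::
  "('n::finite \<Rightarrow> 'n \<Rightarrow> real) \<Rightarrow> ('n \<Rightarrow> 'n \<Rightarrow> real) \<Rightarrow> 'n \<Rightarrow> 'n \<Rightarrow> real" where
  "hitting_cost A w i j =
     (if i = j then 0
      else (\<Sum>\<^sub>\<infinity>ys\<in>first_hit_walks j. walk_prob (trans_mat A) i ys * walk_cost w i ys))"

definition commute_cost ::
  "('n::finite \<Rightarrow> 'n \<Rightarrow> real) \<Rightarrow> ('n \<Rightarrow> 'n \<Rightarrow> real) \<Rightarrow> 'n \<Rightarrow> 'n \<Rightarrow> real" where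
  "commute_cost A w i j = hitting_cost A w i j + hitting_cost A w j i"

definition pinv :: "real^'n^'m \<Rightarrow> real^'m^'n" where
  "pinv M = (THE X. M ** X ** M = M \<and> X ** M ** X = X
                   \<and> transpose (M ** X) = M ** X \<and> transpose (X ** M) = X ** M)"

definition lap :: "('n::finite \<Rightarrow> real) \<Rightarrow> ('n \<Rightarrow> 'n \<Rightarrow> real) \<Rightarrow> real^'n^'n" where
  "lap \<pi> P = (\<chi> i j. \<pi> i * ((if i = j then 1 else 0) - P i j))"

end

theory Submission
  imports Defs
begin

text \<open>
  Fix the target j and write Lp for the pseudo-inverse of L. Both the expected cost of
  reaching j and u(i) = sum_m (Lp_im - Lp_jm + Lp_jj - Lp_ij) g_m vanish at j and solve
  the Poisson equation u(i) = r(i) + sum_k p_ik u(k) for i ~= j: the first by conditioning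
  on the first step of the walk, the second because L Lp = I - J/n for the Laplacian of an
  irreducible chain. By the maximum principle this equation has only one solution
  vanishing at j, so the two agree. Finiteness of the expected cost is not free: it follows
  from the same formula with unit costs, which yields a bounded supersolution for the
  expected hitting time.
\<close>

subsection \<open>Walks that hit a node for the first time\<close>

lemma walk_prob_Nil [simp]: "walk_prob P i [] = 1"
  by (simp add: walk_prob_def)

lemma walk_prob_Cons [simp]: "walk_prob P i (k # ys) = P i k * walk_prob P k ys"
  by (simp add: walk_prob_def)

lemma walk_cost_Nil [simp]: "walk_cost w i [] = 0"
  by (simp add: walk_cost_def)

lemma walk_cost_Cons [simp]: "walk_cost w i (k # ys) = w i k + walk_cost w k ys"
  by (simp add: walk_cost_def)

lemma abs_walk_cost_le:
  "(\<And>x y. \<bar>w x y\<bar> \<le> (B::real)) \<Longrightarrow> \<bar>walk_cost w i ys\<bar> \<le> B * length ys"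
proof (induction ys arbitrary: i)
  case (Cons k ys)
  have "\<bar>walk_cost w i (k # ys)\<bar> \<le> \<bar>w i k\<bar> + \<bar>walk_cost w k ys\<bar>" by simp
  also have "\<dots> \<le> B + B * length ys" using Cons by (intro add_mono) auto
  finally show ?case by (simp add: algebra_simps)
qed simp

lemma first_hit_walks_unfold:
  "first_hit_walks j = insert [j] (\<Union>k\<in>-{j}. Cons k ` first_hit_walks j)"
proof (intro set_eqI iffI)
  fix ys assume ys: "ys \<in> first_hit_walks j"
  then obtain k zs where ys_eq: "ys = k # zs"
    unfolding first_hit_walks_def by (cases ys) auto
  show "ys \<in> insert [j] (\<Union>k\<in>-{j}. Cons k ` first_hit_walks j)"
  proof (cases "k = j")
    case True
    then have "zs = []" using ys ys_eq unfolding first_hit_walks_def by (cases zs) auto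
    then show ?thesis using True ys_eq by simp
  next
    case False
    then have "zs \<in> first_hit_walks j"
      using ys ys_eq unfolding first_hit_walks_def by (cases zs) auto
    then show ?thesis using False ys_eq by auto
  qed
qed (auto simp: first_hit_walks_def)

definition first_hit_walks_upto :: "'n \<Rightarrow> nat \<Rightarrow> 'n list set" where
  "first_hit_walks_upto j l = {ys \<in> first_hit_walks j. length ys \<le> l}"

lemma first_hit_walks_upto_0 [simp]: "first_hit_walks_upto j 0 = {}"
  by (auto simp: first_hit_walks_upto_def first_hit_walks_def)

lemma first_hit_walks_upto_Suc:
  "first_hit_walks_upto j (Suc l) = insert [j] (\<Union>k\<in>-{j}. Cons k ` first_hit_walks_upto j l)"
  unfolding first_hit_walks_upto_def by (subst first_hit_walks_unfold) auto

lemma finite_first_hit_walks_upto [simp]: "finite (first_hit_walks_upto (j::'n::finite) l)"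
proof (rule finite_subset)
  show "first_hit_walks_upto j l \<subseteq> {xs. set xs \<subseteq> UNIV \<and> length xs \<le> l}"
    unfolding first_hit_walks_upto_def by auto
qed (rule finite_lists_length_le[OF finite])

lemma has_sum_UN_disjoint_finite:
  fixes f :: "'a \<Rightarrow> 'b::topological_comm_monoid_add"
  assumes "finite K" "\<And>k. k \<in> K \<Longrightarrow> (f has_sum s k) (B k)"
    and "\<And>k k'. k \<in> K \<Longrightarrow> k' \<in> K \<Longrightarrow> k \<noteq> k' \<Longrightarrow> B k \<inter> B k' = {}"
  shows "(f has_sum sum s K) (\<Union>k\<in>K. B k)"
  using assms
proof (induction K rule: finite_induct)
  case (insert x K)
  have "(f has_sum (s x + sum s K)) (B x \<union> (\<Union>k\<in>K. B k))"
    by (rule has_sum_Un_disjoint) (use insert in auto)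
  then show ?case using insert by simp
qed simp

lemma has_sum_first_step:
  fixes f :: "'n::finite list \<Rightarrow> 'b::topological_comm_monoid_add"
  assumes "X = insert [j] (\<Union>k\<in>-{j}. Cons k ` Y)"
    and "\<And>k. k \<noteq> j \<Longrightarrow> ((\<lambda>ys. f (k # ys)) has_sum s k) Y"
  shows "(f has_sum (f [j] + sum s (-{j}))) X"
proof -
  have "(f has_sum sum s (-{j})) (\<Union>k\<in>-{j}. Cons k ` Y)"
  proof (rule has_sum_UN_disjoint_finite)
    fix k assume "k \<in> -{j}"
    then show "(f has_sum s k) (Cons k ` Y)"
      using assms(2)[of k] by (subst has_sum_reindex) (auto simp: o_def)
  qed auto
  moreover have "[j] \<notin> (\<Union>k\<in>-{j}. Cons k ` Y)" by auto
  ultimately show ?thesis unfolding assms(1) by (rule has_sum_insert[rotated])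
qed

lemma sum_first_hit_walks_upto_Suc:
  fixes f :: "'n::finite list \<Rightarrow> real"
  shows "sum f (first_hit_walks_upto j (Suc l))
    = f [j] + (\<Sum>k\<in>-{j}. \<Sum>ys\<in>first_hit_walks_upto j l. f (k # ys))"
proof -
  have "(f has_sum (f [j] + (\<Sum>k\<in>-{j}. \<Sum>ys\<in>first_hit_walks_upto j l. f (k # ys))))
      (first_hit_walks_upto j (Suc l))"
    by (rule has_sum_first_step[OF first_hit_walks_upto_Suc]) simp
  then show ?thesis by (simp add: has_sum_finite_iff)
qed

lemma infsum_walk_prob_unfold:
  fixes P :: "'n::finite \<Rightarrow> 'n \<Rightarrow> real"
  assumes "\<And>k. walk_prob P k summable_on first_hit_walks j"
  shows "infsum (walk_prob P i) (first_hit_walks j)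
    = P i j + (\<Sum>k\<in>-{j}. P i k * infsum (walk_prob P k) (first_hit_walks j))"
proof -
  have "(walk_prob P i has_sum (walk_prob P i [j]
      + (\<Sum>k\<in>-{j}. P i k * infsum (walk_prob P k) (first_hit_walks j)))) (first_hit_walks j)"
  proof (rule has_sum_first_step[OF first_hit_walks_unfold])
    fix k
    show "((\<lambda>ys. walk_prob P i (k # ys)) has_sum P i k * infsum (walk_prob P k) (first_hit_walks j))
        (first_hit_walks j)"
      using has_sum_cmult_right[OF has_sum_infsum[OF assms], of "P i k"] by simp
  qed
  then show ?thesis by (simp add: infsumI)
qed

lemma infsum_walk_cost_unfold:
  fixes P w :: "'n::finite \<Rightarrow> 'n \<Rightarrow> real" and j :: 'n
  defines "C \<equiv> \<lambda>k. infsum (\<lambda>ys. walk_prob P k ys * walk_cost w k ys) (first_hit_walks j)"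
    and "Q \<equiv> \<lambda>k. infsum (walk_prob P k) (first_hit_walks j)"
  assumes "\<And>k. walk_prob P k summable_on first_hit_walks j"
    and "\<And>k. (\<lambda>ys. walk_prob P k ys * walk_cost w k ys) summable_on first_hit_walks j"
  shows "C i = P i j * w i j + (\<Sum>k\<in>-{j}. P i k * w i k * Q k + P i k * C k)"
proof -
  have "((\<lambda>ys. walk_prob P i ys * walk_cost w i ys) has_sum
      (walk_prob P i [j] * walk_cost w i [j] + (\<Sum>k\<in>-{j}. P i k * w i k * Q k + P i k * C k)))
      (first_hit_walks j)"
  proof (rule has_sum_first_step[OF first_hit_walks_unfold])
    fix k
    have "((\<lambda>ys. P i k * w i k * walk_prob P k ys + P i k * (walk_prob P k ys * walk_cost w k ys))
        has_sum (P i k * w i k * Q k + P i k * C k)) (first_hit_walks j)"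
      unfolding C_def Q_def by (intro has_sum_add has_sum_cmult_right has_sum_infsum assms)
    then show "((\<lambda>ys. walk_prob P i (k # ys) * walk_cost w i (k # ys))
        has_sum (P i k * w i k * Q k + P i k * C k)) (first_hit_walks j)"
      by (simp add: algebra_simps)
  qed
  then show ?thesis unfolding C_def by (simp add: infsumI)
qed

subsection \<open>Irreducible chains\<close>

lemma sum_UNIV_eq_add_Compl:
  fixes f :: "'a::finite \<Rightarrow> 'b::comm_monoid_add"
  shows "(\<Sum>k\<in>UNIV. f k) = f j + (\<Sum>k\<in>-{j}. f k)"
  by (simp add: Compl_eq_Diff_UNIV sum.remove)

locale irreducible_chain =
  fixes P :: "'n::finite \<Rightarrow> 'n \<Rightarrow> real"
  assumes nonneg: "P x y \<ge> 0"
    and row_sum: "(\<Sum>y\<in>UNIV. P x y) = 1"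
    and irreducible: "(x, y) \<in> {(x, y). P x y > 0}\<^sup>*"
begin

lemma walk_prob_nonneg: "walk_prob P i ys \<ge> 0"
  by (induction ys arbitrary: i) (simp_all add: nonneg)

lemma row_sum_Compl: "(\<Sum>k\<in>-{j}. P i k) = 1 - P i j"
  using row_sum[of i] sum_UNIV_eq_add_Compl[of "P i" j] by simp

text \<open>Maximum principle: a function harmonic off j takes its maximum at j,
  since the maximum propagates along edges from any maximiser until j is reached.\<close>
lemma harmonic_off_le:
  assumes "d j = 0" and harmonic: "\<And>i. i \<noteq> j \<Longrightarrow> d i = (\<Sum>k\<in>UNIV. P i k * d k)"
  shows "d i \<le> 0"
proof -
  define M where "M = Max (range d)"
  have le_M: "d x \<le> M" for x unfolding M_def by (rule Max_ge) auto
  obtain i0 where i0: "d i0 = M" unfolding M_def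
    by (metis (mono_tags, lifting) Max_in UNIV_not_empty empty_is_image finite finite_imageI imageE)
  have max_spreads: "d y = M" if "d x = M" "x \<noteq> j" "P x y > 0" for x y
  proof -
    have "(\<Sum>k\<in>UNIV. P x k * (M - d k)) = M * (\<Sum>k\<in>UNIV. P x k) - (\<Sum>k\<in>UNIV. P x k * d k)"
      by (simp add: algebra_simps sum_subtractf sum_distrib_left)
    also have "\<dots> = 0" using row_sum harmonic that by simp
    finally have "\<forall>k\<in>UNIV. P x k * (M - d k) = 0"
      using sum_nonneg_eq_0_iff[of UNIV "\<lambda>k. P x k * (M - d k)"] nonneg le_M by simp
    then have "P x y * (M - d y) = 0" by blast
    then show ?thesis using that by simp
  qed
  have "d t = M \<or> d j = M" if "(i0, t) \<in> {(x, y). P x y > 0}\<^sup>*" for t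
    using that
  proof (induction rule: rtrancl_induct)
    case (step y z)
    then show ?case using max_spreads[of y z] by (cases "y = j") auto
  qed (use i0 in simp)
  then have "d j = M" using irreducible[of i0 j] by blast
  then show ?thesis using le_M[of i] assms(1) by simp
qed

lemma poisson_unique:
  assumes "u j = v j"
    and "\<And>i. i \<noteq> j \<Longrightarrow> u i = r i + (\<Sum>k\<in>UNIV. P i k * u k)"
    and "\<And>i. i \<noteq> j \<Longrightarrow> v i = r i + (\<Sum>k\<in>UNIV. P i k * v k)"
  shows "u = v"
proof
  fix i
  have "u i - v i = (\<Sum>k\<in>UNIV. P i k * (u k - v k))"
    and "v i - u i = (\<Sum>k\<in>UNIV. P i k * (v k - u k))" if "i \<noteq> j" for i
    using assms(2,3)[OF that] by (simp_all add: sum_subtractf right_diff_distrib)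
  then have "u i - v i \<le> 0" and "v i - u i \<le> 0"
    using harmonic_off_le[of "\<lambda>k. u k - v k" j] harmonic_off_le[of "\<lambda>k. v k - u k" j] assms(1)
    by simp_all
  then show "u i = v i" by simp
qed

lemma sum_walk_prob_upto_le_1: "(\<Sum>ys\<in>first_hit_walks_upto j l. walk_prob P i ys) \<le> 1"
proof (induction l arbitrary: i)
  case (Suc l)
  have "(\<Sum>ys\<in>first_hit_walks_upto j (Suc l). walk_prob P i ys)
      = P i j + (\<Sum>k\<in>-{j}. P i k * (\<Sum>ys\<in>first_hit_walks_upto j l. walk_prob P k ys))"
    by (simp add: sum_first_hit_walks_upto_Suc sum_distrib_left)
  also have "\<dots> \<le> P i j + (\<Sum>k\<in>-{j}. P i k)"
    using Suc nonneg by (intro add_left_mono sum_mono) (simp add: mult_left_le)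
  finally show ?case by (simp add: row_sum_Compl)
qed simp

lemma sum_walk_length_upto_le:
  assumes supersolution: "\<And>i. 1 + (\<Sum>k\<in>-{j}. P i k * h k) \<le> h i" and "\<And>i. h i \<ge> 0"
  shows "(\<Sum>ys\<in>first_hit_walks_upto j l. walk_prob P i ys * length ys) \<le> h i"
proof (induction l arbitrary: i)
  case (Suc l)
  have "(\<Sum>ys\<in>first_hit_walks_upto j (Suc l). walk_prob P i ys * length ys)
      = P i j + (\<Sum>k\<in>-{j}. P i k * ((\<Sum>ys\<in>first_hit_walks_upto j l. walk_prob P k ys)
          + (\<Sum>ys\<in>first_hit_walks_upto j l. walk_prob P k ys * length ys)))"
    by (simp add: sum_first_hit_walks_upto_Suc sum_distrib_left sum.distrib[symmetric]
        algebra_simps)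
  also have "\<dots> \<le> P i j + (\<Sum>k\<in>-{j}. P i k * (1 + h k))"
    using Suc nonneg sum_walk_prob_upto_le_1
    by (intro add_left_mono sum_mono mult_left_mono add_mono) auto
  also have "\<dots> = 1 + (\<Sum>k\<in>-{j}. P i k * h k)"
    by (simp add: algebra_simps sum.distrib row_sum_Compl)
  finally show ?case using supersolution[of i] by simp
qed (use assms(2) in simp)

text \<open>A bounded solution u of the hitting-time equations gives the supersolution u + c
  off j, with c = \<Sum>|u|; its value at j only has to absorb one step.\<close>
lemma summable_walk_length:
  assumes "u j = 0" and hitting_time: "\<And>i. i \<noteq> j \<Longrightarrow> u i = 1 + (\<Sum>k\<in>UNIV. P i k * u k)"
  shows "(\<lambda>ys. walk_prob P i ys * length ys) summable_on first_hit_walks j"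
proof -
  define c where "c = (\<Sum>k\<in>UNIV. \<bar>u k\<bar>)"
  have abs_u_le: "\<bar>u k\<bar> \<le> c" for k unfolding c_def by (rule member_le_sum) auto
  define h where "h = (\<lambda>k. if k = j then 1 + 2 * c else u k + c)"
  have h_nonneg: "h k \<ge> 0" for k using abs_u_le[of k] abs_u_le[of j] by (auto simp: h_def)
  have h_Compl: "(\<Sum>k\<in>-{j}. P i k * h k) = (\<Sum>k\<in>-{j}. P i k * u k) + (1 - P i j) * c" for i
  proof -
    have "(\<Sum>k\<in>-{j}. P i k * h k) = (\<Sum>k\<in>-{j}. P i k * u k + P i k * c)"
      by (rule sum.cong) (auto simp: h_def algebra_simps)
    then show ?thesis by (simp add: sum.distrib sum_distrib_right[symmetric] row_sum_Compl)
  qed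
  have shrink: "(1 - P i j) * c \<le> c" for i
    using nonneg[of i j] abs_u_le[of j] by (simp add: algebra_simps)
  have "1 + (\<Sum>k\<in>-{j}. P i k * h k) \<le> h i" for i
  proof (cases "i = j")
    case True
    have "(\<Sum>k\<in>-{j}. P i k * u k) \<le> (\<Sum>k\<in>-{j}. P i k * c)"
      using abs_u_le nonneg by (intro sum_mono mult_left_mono) (auto simp: abs_le_iff)
    also have "\<dots> = (1 - P i j) * c" by (simp add: sum_distrib_right[symmetric] row_sum_Compl)
    finally have "1 + (\<Sum>k\<in>-{j}. P i k * h k) \<le> 1 + 2 * ((1 - P i j) * c)"
      using h_Compl[of i] by linarith
    then show ?thesis using True shrink[of i] by (simp add: h_def)
  next
    case False
    then have "h i = 1 + (\<Sum>k\<in>-{j}. P i k * u k) + c"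
      using hitting_time[OF False] sum_UNIV_eq_add_Compl[of "\<lambda>k. P i k * u k" j] assms(1)
      by (simp add: h_def)
    then show ?thesis using h_Compl[of i] shrink[of i] by linarith
  qed
  then have bound: "(\<Sum>ys\<in>first_hit_walks_upto j l. walk_prob P i ys * length ys) \<le> h i" for l
    by (rule sum_walk_length_upto_le[OF _ h_nonneg])
  show ?thesis
  proof (rule nonneg_bdd_above_summable_on)
    show "bdd_above (sum (\<lambda>ys. walk_prob P i ys * length ys) `
        {X. X \<subseteq> first_hit_walks j \<and> finite X})"
    proof (rule bdd_aboveI, clarify)
      fix X assume X: "X \<subseteq> first_hit_walks j" "finite X"
      define l where "l = Max (insert 0 (length ` X))"
      have "X \<subseteq> first_hit_walks_upto j l" unfolding first_hit_walks_upto_def l_def using X by auto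
      then have "(\<Sum>ys\<in>X. walk_prob P i ys * length ys)
          \<le> (\<Sum>ys\<in>first_hit_walks_upto j l. walk_prob P i ys * length ys)"
        using walk_prob_nonneg by (intro sum_mono2) auto
      then show "(\<Sum>ys\<in>X. walk_prob P i ys * length ys) \<le> h i" using bound by (rule order_trans)
    qed
  qed (use walk_prob_nonneg in auto)
qed

lemma summable_walk_prob:
  assumes "(\<lambda>ys. walk_prob P i ys * length ys) summable_on first_hit_walks j"
  shows "walk_prob P i summable_on first_hit_walks j"
proof (rule summable_on_comparison_test[OF assms])
  fix ys assume "ys \<in> first_hit_walks j"
  then have "length ys \<ge> 1" unfolding first_hit_walks_def by (cases ys) auto
  then show "walk_prob P i ys \<le> walk_prob P i ys * length ys"
    using walk_prob_nonneg[of i ys] by (simp add: mult_le_cancel_left1)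
qed (rule walk_prob_nonneg)

lemma summable_walk_cost:
  assumes "(\<lambda>ys. walk_prob P i ys * length ys) summable_on first_hit_walks j"
  shows "(\<lambda>ys. walk_prob P i ys * walk_cost w i ys) summable_on first_hit_walks j"
proof (rule abs_summable_summable)
  define B where "B = (\<Sum>x\<in>UNIV. \<Sum>y\<in>UNIV. \<bar>w x y\<bar>)"
  have abs_w_le: "\<bar>w x y\<bar> \<le> B" for x y
  proof -
    have "\<bar>w x y\<bar> \<le> (\<Sum>y\<in>UNIV. \<bar>w x y\<bar>)" by (rule member_le_sum) auto
    also have "\<dots> \<le> B"
      unfolding B_def
      by (rule member_le_sum[where f = "\<lambda>x. \<Sum>y\<in>UNIV. \<bar>w x y\<bar>"]) (auto intro: sum_nonneg)
    finally show ?thesis .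
  qed
  show "(\<lambda>ys. norm (walk_prob P i ys * walk_cost w i ys)) summable_on first_hit_walks j"
  proof (rule summable_on_comparison_test[OF summable_on_cmult_right[OF assms, of B]])
    fix ys
    have "\<bar>walk_cost w i ys\<bar> \<le> B * length ys" by (rule abs_walk_cost_le[OF abs_w_le])
    from mult_left_mono[OF this walk_prob_nonneg[of i ys]]
    show "norm (walk_prob P i ys * walk_cost w i ys) \<le> B * (walk_prob P i ys * length ys)"
      using walk_prob_nonneg[of i ys] by (simp add: abs_mult algebra_simps)
  qed simp
qed

text \<open>Finite expected hitting time, witnessed by a solution of the hitting-time equations,
  is what makes the walk sums below converge.\<close>
context
  fixes j :: 'n and \<tau> :: "'n \<Rightarrow> real"
  assumes hitting_time_zero: "\<tau> j = 0"
    and hitting_time: "\<And>i. i \<noteq> j \<Longrightarrow> \<tau> i = 1 + (\<Sum>k\<in>UNIV. P i k * \<tau> k)"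
begin

lemma summable_walk_prob_hitting: "walk_prob P i summable_on first_hit_walks j"
  by (rule summable_walk_prob[OF summable_walk_length[OF hitting_time_zero hitting_time]])

lemma summable_walk_cost_hitting:
  "(\<lambda>ys. walk_prob P i ys * walk_cost w i ys) summable_on first_hit_walks j"
  by (rule summable_walk_cost[OF summable_walk_length[OF hitting_time_zero hitting_time]])

lemma hitting_probability_eq_1:
  assumes "i \<noteq> j"
  shows "infsum (walk_prob P i) (first_hit_walks j) = 1"
proof -
  define q where "q = (\<lambda>k. if k = j then 1 else infsum (walk_prob P k) (first_hit_walks j))"
  have "q = (\<lambda>_. 1)"
  proof (rule poisson_unique[where r = "\<lambda>_. 0"])
    fix i assume "i \<noteq> j"
    have "(\<Sum>k\<in>-{j}. P i k * q k) = (\<Sum>k\<in>-{j}. P i k * infsum (walk_prob P k) (first_hit_walks j))"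
      by (rule sum.cong) (auto simp: q_def)
    then have "q i = P i j * q j + (\<Sum>k\<in>-{j}. P i k * q k)"
      using infsum_walk_prob_unfold[OF summable_walk_prob_hitting, of i] \<open>i \<noteq> j\<close>
      by (simp add: q_def)
    also have "\<dots> = (\<Sum>k\<in>UNIV. P i k * q k)" by (rule sum_UNIV_eq_add_Compl[symmetric])
    finally show "q i = 0 + (\<Sum>k\<in>UNIV. P i k * q k)" by simp
  qed (simp_all add: q_def row_sum)
  then have "q i = 1" by simp
  then show ?thesis using assms by (simp add: q_def)
qed

lemma expected_cost_poisson:
  fixes w :: "'n \<Rightarrow> 'n \<Rightarrow> real"
  defines "C \<equiv> \<lambda>k. if k = j then 0
      else infsum (\<lambda>ys. walk_prob P k ys * walk_cost w k ys) (first_hit_walks j)"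
  assumes "i \<noteq> j"
  shows "C i = (\<Sum>k\<in>UNIV. P i k * w i k) + (\<Sum>k\<in>UNIV. P i k * C k)"
proof -
  have "C i = P i j * w i j + (\<Sum>k\<in>-{j}. P i k * w i k * infsum (walk_prob P k) (first_hit_walks j)
      + P i k * infsum (\<lambda>ys. walk_prob P k ys * walk_cost w k ys) (first_hit_walks j))"
    using infsum_walk_cost_unfold[OF summable_walk_prob_hitting summable_walk_cost_hitting, of i]
      assms(2)
    by (simp add: C_def)
  also have "\<dots> = P i j * w i j + (\<Sum>k\<in>-{j}. P i k * w i k + P i k * C k)"
    by (rule arg_cong[where f = "\<lambda>x. _ + x"], rule sum.cong)
      (auto simp: hitting_probability_eq_1 C_def)
  finally show ?thesis
    by (simp add: sum.distrib sum_UNIV_eq_add_Compl[of _ j] C_def)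
qed

end

end

subsection \<open>The pseudo-inverse of the Laplacian\<close>

lemma matrix_add_rdistrib:
  "((B::'a::semiring_1^'n::finite^'m) + C) ** (A::'a^'p::finite^'n) = B ** A + C ** A"
  by (vector matrix_matrix_mult_def sum.distrib[symmetric] algebra_simps)

lemma matrix_diff_ldistrib: "(A::'a::ring_1^'n::finite^'m) ** (B - C) = A ** B - A ** C"
  by (vector matrix_matrix_mult_def sum_subtractf[symmetric] algebra_simps)

lemma matrix_diff_rdistrib:
  "((B::'a::ring_1^'n::finite^'m) - C) ** (A::'a^'p::finite^'n) = B ** A - C ** A"
  by (vector matrix_matrix_mult_def sum_subtractf[symmetric] algebra_simps)

lemma moore_penrose_unique:
  fixes A :: "real^'n::finite^'m::finite" and X Y :: "real^'m^'n"
  assumes X1: "A ** X ** A = A" and X2: "X ** A ** X = X"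
    and X3: "transpose (A ** X) = A ** X" and X4: "transpose (X ** A) = X ** A"
    and Y1: "A ** Y ** A = A" and Y2: "Y ** A ** Y = Y"
    and Y3: "transpose (A ** Y) = A ** Y" and Y4: "transpose (Y ** A) = Y ** A"
  shows "X = Y"
proof -
  have AX: "A ** X = A ** Y"
  proof -
    have "A ** X = (A ** Y) ** (A ** X)" using Y1 by (simp add: matrix_mul_assoc)
    also have "\<dots> = transpose ((A ** X) ** (A ** Y))"
      using X3 Y3 by (metis matrix_transpose_mul)
    also have "(A ** X) ** (A ** Y) = A ** Y" using X1 by (simp add: matrix_mul_assoc)
    finally show ?thesis using Y3 by simp
  qed
  have XA: "X ** A = Y ** A"
  proof -
    have "X ** A = (X ** A) ** (Y ** A)" using Y1 by (metis matrix_mul_assoc)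
    also have "\<dots> = transpose ((Y ** A) ** (X ** A))"
      using X4 Y4 by (metis matrix_transpose_mul)
    also have "(Y ** A) ** (X ** A) = Y ** A" using X1 by (metis matrix_mul_assoc)
    finally show ?thesis using Y4 by simp
  qed
  have "X = (X ** A) ** X" using X2 by (simp add: matrix_mul_assoc)
  also have "\<dots> = (Y ** A) ** Y" using AX XA by (metis matrix_mul_assoc)
  finally show ?thesis using Y2 by simp
qed

lemma pinv_eqI:
  assumes "M ** X ** M = M" "X ** M ** X = X"
    and "transpose (M ** X) = M ** X" "transpose (X ** M) = X ** M"
  shows "pinv M = X"
  unfolding pinv_def using assms moore_penrose_unique[OF _ _ _ _ assms] by blast

lemma pinv_eq_inverse_shift:
  fixes L E B :: "real^'n::finite^'n"
  assumes LE: "L ** E = 0" and EL: "E ** L = 0" and EE: "E ** E = E" and E_sym: "transpose E = E"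
    and inverse: "B ** (L + E) = mat 1"
  shows "pinv L = B - E" and "L ** pinv L = mat 1 - E"
proof -
  have inverse': "(L + E) ** B = mat 1" using inverse matrix_left_right_inverse by blast
  have EB: "E ** B = E"
  proof -
    have "E ** (L + E) = E" by (simp add: matrix_add_ldistrib EL EE)
    then have "E ** ((L + E) ** B) = E ** B" by (simp add: matrix_mul_assoc)
    then show ?thesis using inverse' by simp
  qed
  have BE: "B ** E = E"
  proof -
    have "(L + E) ** E = E" by (simp add: matrix_add_rdistrib LE EE)
    then have "(B ** (L + E)) ** E = B ** E" by (metis matrix_mul_assoc)
    then show ?thesis using inverse by simp
  qed
  have "L ** B + E = mat 1" using inverse' by (simp add: matrix_add_rdistrib EB)
  then have LX: "L ** (B - E) = mat 1 - E" by (simp add: matrix_diff_ldistrib LE eq_diff_eq)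
  have "B ** L + E = mat 1" using inverse by (simp add: matrix_add_ldistrib BE)
  then have XL: "(B - E) ** L = mat 1 - E" by (simp add: matrix_diff_rdistrib EL eq_diff_eq)
  have sym: "transpose (mat 1 - E) = mat 1 - E"
    using E_sym by (simp add: transpose_def vec_eq_iff mat_def)
  show "pinv L = B - E"
  proof (rule pinv_eqI)
    show "L ** (B - E) ** L = L" using LX EL by (simp add: matrix_diff_rdistrib)
    show "(B - E) ** L ** (B - E) = B - E"
      using XL by (simp add: matrix_diff_rdistrib matrix_diff_ldistrib EB EE)
  qed (use LX XL sym in simp_all)
  then show "L ** pinv L = mat 1 - E" using LX by simp
qed

definition avg_mat :: "real^'n::finite^'n" where
  "avg_mat = (\<chi> i j. 1 / real CARD('n))"

lemma avg_mat_idem: "avg_mat ** avg_mat = avg_mat"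
  by (simp add: avg_mat_def matrix_matrix_mult_def vec_eq_iff)

lemma transpose_avg_mat: "transpose avg_mat = avg_mat"
  by (simp add: avg_mat_def transpose_def vec_eq_iff)

lemma lap_sum_mult:
  "(\<Sum>k\<in>UNIV. lap \<pi> P $ i $ k * x k) = \<pi> i * (x i - (\<Sum>k\<in>UNIV. P i k * x k))"
proof -
  have "(\<Sum>k\<in>UNIV. lap \<pi> P $ i $ k * x k)
      = (\<Sum>k\<in>UNIV. (if k = i then \<pi> i * x i else 0) - \<pi> i * (P i k * x k))"
    by (rule sum.cong) (auto simp: lap_def algebra_simps)
  then show ?thesis by (simp add: sum_subtractf sum_distrib_left algebra_simps)
qed

definition hitting_potential :: "real^'n^'n \<Rightarrow> 'n \<Rightarrow> ('n::finite \<Rightarrow> real) \<Rightarrow> 'n \<Rightarrow> real" where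
  "hitting_potential Lp j g i =
    (\<Sum>m\<in>UNIV. (Lp $ i $ m - Lp $ j $ m + Lp $ j $ j - Lp $ i $ j) * g m)"

lemma hitting_potential_same [simp]: "hitting_potential Lp j g j = 0"
  by (simp add: hitting_potential_def)

lemma hitting_potential_add_swap:
  "hitting_potential Lp j g i + hitting_potential Lp i g j
    = (Lp $ i $ i + Lp $ j $ j - Lp $ i $ j - Lp $ j $ i) * (\<Sum>m\<in>UNIV. g m)"
  unfolding hitting_potential_def sum.distrib[symmetric] sum_distrib_left
  by (rule sum.cong) (simp_all add: algebra_simps)

locale stationary_chain = irreducible_chain P for P :: "'n::finite \<Rightarrow> 'n \<Rightarrow> real" +
  fixes \<pi> :: "'n \<Rightarrow> real"
  assumes stationary: "stationary_dist P \<pi>"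
begin

lemma stationary_eq: "(\<Sum>i\<in>UNIV. \<pi> i * P i j) = \<pi> j"
  using stationary by (simp add: stationary_dist_def)

text \<open>A zero of \<pi> propagates backwards along edges, and every node reaches it.\<close>
lemma pi_pos: "\<pi> i > 0"
proof (rule ccontr)
  have pi_nonneg: "\<pi> x \<ge> 0" for x using stationary by (simp add: stationary_dist_def)
  assume "\<not> \<pi> i > 0"
  then have "\<pi> i = 0" using pi_nonneg[of i] by simp
  have pred_zero: "\<pi> x = 0" if "\<pi> z = 0" "P x z > 0" for x z
  proof -
    have "\<pi> x * P x z \<le> (\<Sum>y\<in>UNIV. \<pi> y * P y z)"
      using pi_nonneg nonneg by (intro member_le_sum[where f = "\<lambda>y. \<pi> y * P y z"]) auto
    then have "\<pi> x * P x z \<le> 0" using stationary_eq that by simp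
    then show ?thesis using that pi_nonneg[of x] by (simp add: mult_le_0_iff)
  qed
  have "\<pi> x = 0" for x
    using irreducible[of x i]
    by (induction rule: converse_rtrancl_induct) (use \<open>\<pi> i = 0\<close> pred_zero in auto)
  then show False using stationary by (simp add: stationary_dist_def)
qed

lemma lap_row_sum: "(\<Sum>k\<in>UNIV. lap \<pi> P $ i $ k) = 0"
  using lap_sum_mult[of \<pi> P i "\<lambda>_. 1"] by (simp add: row_sum)

lemma lap_mult_avg_mat: "lap \<pi> P ** avg_mat = 0"
  using lap_row_sum
  by (simp add: avg_mat_def matrix_matrix_mult_def vec_eq_iff sum_divide_distrib[symmetric])

lemma lap_col_sum: "(\<Sum>i\<in>UNIV. lap \<pi> P $ i $ k) = 0"
proof -
  have "(\<Sum>i\<in>UNIV. lap \<pi> P $ i $ k) = (\<Sum>i\<in>UNIV. (if i = k then \<pi> i else 0) - \<pi> i * P i k)"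
    by (rule sum.cong) (auto simp: lap_def algebra_simps)
  then show ?thesis by (simp add: sum_subtractf stationary_eq)
qed

lemma avg_mat_mult_lap: "avg_mat ** lap \<pi> P = 0"
  using lap_col_sum
  by (simp add: avg_mat_def matrix_matrix_mult_def vec_eq_iff sum_divide_distrib[symmetric])

text \<open>On the kernel of L + J/n the column sums of L force \<Sum>x = 0, so x is harmonic, hence
  constant, hence zero.\<close>
lemma lap_plus_avg_mat_injective:
  assumes "(lap \<pi> P + avg_mat) *v x = 0"
  shows "x = 0"
proof -
  define s where "s = (\<Sum>k\<in>UNIV. x $ k)"
  have row: "(\<Sum>k\<in>UNIV. lap \<pi> P $ i $ k * x $ k) = - s / real CARD('n)" for i
  proof -
    have "((lap \<pi> P + avg_mat) *v x) $ i = 0" using assms by simp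
    then show ?thesis
      by (simp add: matrix_vector_mult_def avg_mat_def s_def sum.distrib distrib_right
          sum_divide_distrib eq_neg_iff_add_eq_0)
  qed
  have "(\<Sum>i\<in>UNIV. \<Sum>k\<in>UNIV. lap \<pi> P $ i $ k * x $ k) = (\<Sum>k\<in>UNIV. (\<Sum>i\<in>UNIV. lap \<pi> P $ i $ k) * x $ k)"
    by (subst sum.swap) (simp add: sum_distrib_right)
  then have "s = 0" by (simp add: row lap_col_sum)
  then have harmonic: "x $ i = 0 + (\<Sum>k\<in>UNIV. P i k * x $ k)" for i
    using row[of i] lap_sum_mult[of \<pi> P i "\<lambda>k. x $ k"] pi_pos[of i] by simp
  fix j
  have "(\<lambda>i. x $ i) = (\<lambda>_. x $ j)"
  proof (rule poisson_unique[where r = "\<lambda>_. 0"])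
    fix i show "x $ i = 0 + (\<Sum>k\<in>UNIV. P i k * x $ k)" by (rule harmonic)
  next
    fix i show "x $ j = 0 + (\<Sum>k\<in>UNIV. P i k * x $ j)"
      by (simp add: sum_distrib_right[symmetric] row_sum)
  qed simp
  then have const: "x $ i = x $ j" for i by (simp add: fun_eq_iff)
  have "s = (\<Sum>k\<in>(UNIV :: 'n set). x $ j)" unfolding s_def by (intro sum.cong refl const)
  then have "x $ j = 0" using \<open>s = 0\<close> by simp
  then show ?thesis using const by (simp add: vec_eq_iff)
qed

lemma lap_mult_pinv: "lap \<pi> P ** pinv (lap \<pi> P) = mat 1 - avg_mat"
proof -
  obtain B where "B ** (lap \<pi> P + avg_mat) = mat 1"
    using lap_plus_avg_mat_injective matrix_left_invertible_ker by blast
  then show ?thesis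
    by (rule pinv_eq_inverse_shift(2)
        [OF lap_mult_avg_mat avg_mat_mult_lap avg_mat_idem transpose_avg_mat])
qed

lemma hitting_potential_poisson:
  fixes j :: 'n and g :: "'n \<Rightarrow> real"
  defines "u \<equiv> hitting_potential (pinv (lap \<pi> P)) j g"
  assumes "i \<noteq> j"
  shows "u i = g i / \<pi> i + (\<Sum>k\<in>UNIV. P i k * u k)"
proof -
  define Lp where "Lp = pinv (lap \<pi> P)"
  define S where "S = (\<Sum>m\<in>UNIV. g m)"
  define n where "n = real CARD('n)"
  have entry: "(\<Sum>k\<in>UNIV. lap \<pi> P $ i $ k * Lp $ k $ m) = (if i = m then 1 else 0) - 1 / n" for m
  proof -
    have "(lap \<pi> P ** Lp) $ i $ m = (mat 1 - avg_mat) $ i $ m" using lap_mult_pinv Lp_def by simp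
    then show ?thesis by (simp add: matrix_matrix_mult_def mat_def avg_mat_def n_def)
  qed
  define c where "c = (\<Sum>m\<in>UNIV. (Lp $ j $ j - Lp $ j $ m) * g m)"
  have u: "u k = (\<Sum>m\<in>UNIV. Lp $ k $ m * g m) + c - S * Lp $ k $ j" for k
    unfolding u_def Lp_def hitting_potential_def S_def c_def
    by (simp add: algebra_simps sum.distrib sum_subtractf sum_distrib_left sum_distrib_right)
  have "(\<Sum>k\<in>UNIV. lap \<pi> P $ i $ k * u k)
      = (\<Sum>k\<in>UNIV. lap \<pi> P $ i $ k * (\<Sum>m\<in>UNIV. Lp $ k $ m * g m))
        + c * (\<Sum>k\<in>UNIV. lap \<pi> P $ i $ k) - S * (\<Sum>k\<in>UNIV. lap \<pi> P $ i $ k * Lp $ k $ j)"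
    unfolding u by (simp add: algebra_simps sum.distrib sum_subtractf sum_distrib_left)
  also have "(\<Sum>k\<in>UNIV. lap \<pi> P $ i $ k * (\<Sum>m\<in>UNIV. Lp $ k $ m * g m))
      = (\<Sum>m\<in>UNIV. (\<Sum>k\<in>UNIV. lap \<pi> P $ i $ k * Lp $ k $ m) * g m)"
    by (simp add: sum_distrib_left sum_distrib_right mult.assoc) (rule sum.swap)
  also have "\<dots> = (\<Sum>m\<in>UNIV. (if i = m then g m else 0) - g m / n)"
    by (rule sum.cong) (auto simp: entry left_diff_distrib)
  also have "\<dots> = g i - S / n" by (simp add: sum_subtractf S_def sum_divide_distrib)
  also have "(\<Sum>k\<in>UNIV. lap \<pi> P $ i $ k) = 0" by (rule lap_row_sum)
  also have "(\<Sum>k\<in>UNIV. lap \<pi> P $ i $ k * Lp $ k $ j) = - 1 / n" using entry[of j] assms(2) by simp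
  finally have "(\<Sum>k\<in>UNIV. lap \<pi> P $ i $ k * u k) = g i" by simp
  then show ?thesis
    using lap_sum_mult[of \<pi> P i u] pi_pos[of i] by (simp add: field_simps)
qed

theorem hitting_cost_eq_potential:
  fixes w :: "'n \<Rightarrow> 'n \<Rightarrow> real"
  defines "r \<equiv> \<lambda>m. \<Sum>k\<in>UNIV. P m k * w m k"
  shows "(if i = j then 0
      else infsum (\<lambda>ys. walk_prob P i ys * walk_cost w i ys) (first_hit_walks j))
    = hitting_potential (pinv (lap \<pi> P)) j (\<lambda>m. r m * \<pi> m) i"
proof -
  let ?u = "hitting_potential (pinv (lap \<pi> P)) j"
  have hitting_time: "?u \<pi> i = 1 + (\<Sum>k\<in>UNIV. P i k * ?u \<pi> k)" if "i \<noteq> j" for i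
    using hitting_potential_poisson[OF that, of \<pi>] pi_pos[of i] by simp
  have "(\<lambda>i. if i = j then 0
        else infsum (\<lambda>ys. walk_prob P i ys * walk_cost w i ys) (first_hit_walks j))
      = ?u (\<lambda>m. r m * \<pi> m)"
  proof (rule poisson_unique[where r = r])
    fix i assume "i \<noteq> j"
    show "?u (\<lambda>m. r m * \<pi> m) i = r i + (\<Sum>k\<in>UNIV. P i k * ?u (\<lambda>m. r m * \<pi> m) k)"
      using hitting_potential_poisson[OF \<open>i \<noteq> j\<close>, of "\<lambda>m. r m * \<pi> m"] pi_pos[of i] by simp
  qed (use expected_cost_poisson[OF hitting_potential_same hitting_time] in \<open>simp_all add: r_def\<close>)
  then show ?thesis by (simp add: fun_eq_iff)
qed

end

subsection \<open>The random walk on a network\<close>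

text \<open>A one-node network with A = 0 is strongly connected but has no random walk;
  it is excluded by the existence of a stationary distribution.\<close>
lemma degree_pos:
  assumes "\<forall>x y. A x y \<ge> 0" "strongly_connected A" "stationary_dist (trans_mat A) \<pi>"
  shows "degree A x > 0"
proof (cases "\<exists>y. y \<noteq> x")
  case True
  then obtain y where "y \<noteq> x" by blast
  have "(x, y) \<in> {(x, y). A x y > 0}\<^sup>*" using assms(2) by (simp add: strongly_connected_def)
  then have "\<exists>z. A x z > 0" using \<open>y \<noteq> x\<close> by (induction rule: converse_rtrancl_induct) auto
  then obtain z where "A x z > 0" by blast
  moreover have "A x z \<le> degree A x"
    unfolding degree_def using assms(1) by (intro member_le_sum) auto
  ultimately show ?thesis by simp
next
  case False
  then have U: "UNIV = {x}" by auto
  have "(\<Sum>i\<in>UNIV. \<pi> i * trans_mat A i x) = \<pi> x" "(\<Sum>i\<in>UNIV. \<pi> i) = 1"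
    using assms(3) by (simp_all add: stationary_dist_def)
  then have "\<pi> x * trans_mat A x x = \<pi> x" "\<pi> x = 1" unfolding U by simp_all
  then have "degree A x \<noteq> 0" by (auto simp: trans_mat_def)
  moreover have "degree A x \<ge> 0" unfolding degree_def using assms(1) by (simp add: sum_nonneg)
  ultimately show ?thesis by simp
qed

lemma stationary_chain_trans_mat:
  assumes nonneg: "\<forall>x y. A x y \<ge> 0" and "strongly_connected A"
    and stat: "stationary_dist (trans_mat A) \<pi>"
  shows "stationary_chain (trans_mat A) \<pi>"
proof unfold_locales
  note deg_pos = degree_pos[OF assms]
  show "trans_mat A x y \<ge> 0" for x y using nonneg deg_pos[of x] by (simp add: trans_mat_def)
  show "(\<Sum>y\<in>UNIV. trans_mat A x y) = 1" for x
    using deg_pos[of x] by (simp add: trans_mat_def degree_def sum_divide_distrib[symmetric])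
  have "{(x, y). trans_mat A x y > 0} = {(x, y). A x y > 0}"
    using deg_pos nonneg by (auto simp: trans_mat_def zero_less_divide_iff) (meson not_less)+
  then show "(x, y) \<in> {(x, y). trans_mat A x y > 0}\<^sup>*" for x y
    using assms(2) by (simp add: strongly_connected_def)
qed (rule stat)

theorem corollary3:
  fixes A w :: "'n::finite \<Rightarrow> 'n \<Rightarrow> real" and \<pi> :: "'n \<Rightarrow> real"
  assumes nonneg: "\<forall>x y. A x y \<ge> 0"
    and sc: "strongly_connected A"
    and stat: "stationary_dist (trans_mat A) \<pi>"
  defines "Lp \<equiv> pinv (lap \<pi> (trans_mat A))"
    and "g \<equiv> (\<lambda>m. (\<Sum>k\<in>UNIV. trans_mat A m k * w m k) * \<pi> m)"
  shows "\<forall>i j. hitting_cost A w i j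
             = (\<Sum>m\<in>UNIV. (Lp $ i $ m - Lp $ j $ m + Lp $ j $ j - Lp $ i $ j) * g m)
          \<and> commute_cost A w i j
             = (Lp $ i $ i + Lp $ j $ j - Lp $ i $ j - Lp $ j $ i) * (\<Sum>m\<in>UNIV. g m)"
proof (intro allI conjI)
  interpret stationary_chain "trans_mat A" \<pi>
    by (rule stationary_chain_trans_mat[OF nonneg sc stat])
  have hitting: "hitting_cost A w i j = hitting_potential Lp j g i" for i j
    using hitting_cost_eq_potential[where w = w and i = i and j = j]
    by (simp add: hitting_cost_def Lp_def g_def)
  fix i j
  show "hitting_cost A w i j = (\<Sum>m\<in>UNIV. (Lp $ i $ m - Lp $ j $ m + Lp $ j $ j - Lp $ i $ j) * g m)"
    by (simp add: hitting hitting_potential_def)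
  show "commute_cost A w i j = (Lp $ i $ i + Lp $ j $ j - Lp $ i $ j - Lp $ j $ i) * (\<Sum>m\<in>UNIV. g m)"
    by (simp add: commute_cost_def hitting hitting_potential_add_swap)
qed

end
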